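(* Let $S$ be a category, $M=\mathrm{U_{mon}}(S)$, and $a\in S$. Then $\varepsilon_S(a)\leqslant_M 1$ iff $a\leqslant_S \mathrm{s}(a)$, and $\varepsilon_S(a)\mathbin{\widetilde\leqslant}_M 1$ iff $a\mathbin{\widetilde\leqslant}_S\mathrm{t}(a)$. Furthermore, for every $\boldsymbol{b}\in M\setminus\{1\}$: if $a$ is not right invertible in $S$, then $\varepsilon_S(a)\leqslant_M\boldsymbol{b}$ iff $a\leqslant_S\nabla_0(\boldsymbol{b})$; and if $a$ is not left invertible in $S$, then $\varepsilon_S(a)\mathbin{\widetilde\leqslant}_M\boldsymbol{b}$ iff $a\mathbin{\widetilde\leqslant}_S\nabla_1(\boldsymbol{b})$.
   Context: Categories are arrow-only: a set $S$ with partial associative multiplication, identities $\mathrm{Id}\,S$, source/target identities $\mathrm{s}(x),\mathrm{t}(x)$. $\mathrm{U_{mon}}(S)$ is the monoid presented by generators $\varepsilon_S(x)$ ($x\in S$) and relations $\varepsilon_S(e)=1$ ($e\in\mathrm{Id}\,S$), $\varepsilon_S(x)\varepsilon_S(y)=\varepsilon_S(xy)$ whenever $xy$ is defined. Every $\boldsymbol{b}\in\mathrm{U_{mon}}(S)$ can be written uniquely as $\varepsilon_S(b_1)\cdots\varepsilon_S(b_n)$ with each $b_i\notin\mathrm{Id}\,S$ and each product $b_ib_{i+1}$ undefined (the reduced sequence $(b_1,\dots,b_n)$ of $\boldsymbol b$); for $\boldsymbol b\ne1$ (i.e. $n>0$), set $\nabla_0(\boldsymbol{b})=b_1$ and $\nabla_1(\boldsymbol{b})=b_n$.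 In any category (or monoid) $C$, $a\leqslant_C b$ means $b=ax$ for some $x\in C$, and $a\mathbin{\widetilde\leqslant}_C b$ means $b=xa$ for some $x\in C$. $a$ is right (left) invertible if $ax$ (resp. $xa$) is an identity for some $x$. *)

theory Defs
  imports "HOL-Algebra.Group"
begin

text \<open>Arrow-only categories: a carrier S with a partial multiplication m
  (m x y = None means xy undefined). Composition is written diagrammatically:
  xy is defined iff t(x) = s(y).\<close>

definition Idt :: "'a set \<Rightarrow> ('a \<Rightarrow> 'a \<Rightarrow> 'a option) \<Rightarrow> 'a set" where
  "Idt S m = {e \<in> S. \<forall>x\<in>S. (m e x \<noteq> None \<longrightarrow> m e x = Some x)
                              \<and> (m x e \<noteq> None \<longrightarrow> m x e = Some x)}"

definition category :: "'a set \<Rightarrow> ('a \<Rightarrow> 'a \<Rightarrow> 'a option) \<Rightarrow> bool" where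
  "category S m \<longleftrightarrow>
     (\<forall>x\<in>S. \<forall>y\<in>S. \<forall>z. m x y = Some z \<longrightarrow> z \<in> S)
   \<and> (\<forall>x y. m x y \<noteq> None \<longrightarrow> x \<in> S \<and> y \<in> S)
   \<and> (\<forall>x\<in>S. \<forall>y\<in>S. \<forall>z\<in>S.
        Option.bind (m x y) (\<lambda>u. m u z) = Option.bind (m y z) (\<lambda>v. m x v))
   \<and> (\<forall>x\<in>S. \<forall>y\<in>S. \<forall>z\<in>S. m x y \<noteq> None \<longrightarrow> m y z \<noteq> None \<longrightarrow>
        Option.bind (m x y) (\<lambda>u. m u z) \<noteq> None)
   \<and> (\<forall>x\<in>S. (\<exists>e\<in>Idt S m. m e x \<noteq> None) \<and> (\<exists>e\<in>Idt S m. m x e \<noteq> None))"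

definition src :: "'a set \<Rightarrow> ('a \<Rightarrow> 'a \<Rightarrow> 'a option) \<Rightarrow> 'a \<Rightarrow> 'a" where
  "src S m x = (THE e. e \<in> Idt S m \<and> m e x \<noteq> None)"

definition tgt :: "'a set \<Rightarrow> ('a \<Rightarrow> 'a \<Rightarrow> 'a option) \<Rightarrow> 'a \<Rightarrow> 'a" where
  "tgt S m x = (THE e. e \<in> Idt S m \<and> m x e \<noteq> None)"

definition cat_le :: "'a set \<Rightarrow> ('a \<Rightarrow> 'a \<Rightarrow> 'a option) \<Rightarrow> 'a \<Rightarrow> 'a \<Rightarrow> bool" where
  "cat_le S m a b \<longleftrightarrow> (\<exists>x\<in>S. m a x = Some b)"

definition cat_rle :: "'a set \<Rightarrow> ('a \<Rightarrow> 'a \<Rightarrow> 'a option) \<Rightarrow> 'a \<Rightarrow> 'a \<Rightarrow> bool" where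
  "cat_rle S m a b \<longleftrightarrow> (\<exists>x\<in>S. m x a = Some b)"

definition right_invertible :: "'a set \<Rightarrow> ('a \<Rightarrow> 'a \<Rightarrow> 'a option) \<Rightarrow> 'a \<Rightarrow> bool" where
  "right_invertible S m a \<longleftrightarrow> (\<exists>x\<in>S. \<exists>e\<in>Idt S m. m a x = Some e)"

definition left_invertible :: "'a set \<Rightarrow> ('a \<Rightarrow> 'a \<Rightarrow> 'a option) \<Rightarrow> 'a \<Rightarrow> bool" where
  "left_invertible S m a \<longleftrightarrow> (\<exists>x\<in>S. \<exists>e\<in>Idt S m. m x a = Some e)"

inductive ucong :: "'a set \<Rightarrow> ('a \<Rightarrow> 'a \<Rightarrow> 'a option) \<Rightarrow> 'a list \<Rightarrow> 'a list \<Rightarrow> bool"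
  for S m where
  urefl: "w \<in> lists S \<Longrightarrow> ucong S m w w"
| usym: "ucong S m u v \<Longrightarrow> ucong S m v u"
| utrans: "ucong S m u v \<Longrightarrow> ucong S m v w \<Longrightarrow> ucong S m u w"
| uid: "e \<in> Idt S m \<Longrightarrow> ucong S m [e] []"
| umul: "x \<in> S \<Longrightarrow> y \<in> S \<Longrightarrow> m x y = Some z \<Longrightarrow> ucong S m [x, y] [z]"
| ucompat: "ucong S m u v \<Longrightarrow> p \<in> lists S \<Longrightarrow> q \<in> lists S \<Longrightarrow>
             ucong S m (p @ u @ q) (p @ v @ q)"

definition ucls :: "'a set \<Rightarrow> ('a \<Rightarrow> 'a \<Rightarrow> 'a option) \<Rightarrow> 'a list \<Rightarrow> 'a list set" where
  "ucls S m w = {v. ucong S m w v}"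

definition Umon :: "'a set \<Rightarrow> ('a \<Rightarrow> 'a \<Rightarrow> 'a option) \<Rightarrow> 'a list set monoid" where
  "Umon S m = \<lparr> carrier = ucls S m ` lists S,
                mult = (\<lambda>A B. ucls S m ((SOME u. u \<in> A) @ (SOME v. v \<in> B))),
                one = ucls S m [] \<rparr>"

definition eps :: "'a set \<Rightarrow> ('a \<Rightarrow> 'a \<Rightarrow> 'a option) \<Rightarrow> 'a \<Rightarrow> 'a list set" where
  "eps S m x = ucls S m [x]"

definition mon_le :: "('b, 'c) monoid_scheme \<Rightarrow> 'b \<Rightarrow> 'b \<Rightarrow> bool" where
  "mon_le M a b \<longleftrightarrow> (\<exists>x\<in>carrier M. b = a \<otimes>\<^bsub>M\<^esub> x)"

definition mon_rle :: "('b, 'c) monoid_scheme \<Rightarrow> 'b \<Rightarrow> 'b \<Rightarrow> bool" where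
  "mon_rle M a b \<longleftrightarrow> (\<exists>x\<in>carrier M. b = x \<otimes>\<^bsub>M\<^esub> a)"

definition reduced :: "'a set \<Rightarrow> ('a \<Rightarrow> 'a \<Rightarrow> 'a option) \<Rightarrow> 'a list \<Rightarrow> bool" where
  "reduced S m bs \<longleftrightarrow> bs \<in> lists S \<and> (\<forall>x\<in>set bs. x \<notin> Idt S m)
     \<and> (\<forall>i. Suc i < length bs \<longrightarrow> m (bs ! i) (bs ! Suc i) = None)"

definition redseq :: "'a set \<Rightarrow> ('a \<Rightarrow> 'a \<Rightarrow> 'a option) \<Rightarrow> 'a list set \<Rightarrow> 'a list" where
  "redseq S m b = (THE bs. reduced S m bs \<and> ucls S m bs = b)"

definition nabla0 :: "'a set \<Rightarrow> ('a \<Rightarrow> 'a \<Rightarrow> 'a option) \<Rightarrow> 'a list set \<Rightarrow> 'a" where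
  "nabla0 S m b = hd (redseq S m b)"

definition nabla1 :: "'a set \<Rightarrow> ('a \<Rightarrow> 'a \<Rightarrow> 'a option) \<Rightarrow> 'a list set \<Rightarrow> 'a" where
  "nabla1 S m b = last (redseq S m b)"

end

theory Submission
  imports Defs
begin

text \<open>Reading a word from left to right while keeping a reduced stack (multiply each
  incoming letter into the top letter as long as the product is defined, drop identities)
  computes a normal form that is invariant under the defining relations of U_mon(S) and
  fixes reduced words; so every element has a unique reduced representative.
  If a is not right invertible, the bottom letter of the stack built from a word a w is
  always of the form a u: it only ever changes by right multiplication, and it never becomes
  an identity. This gives the characterisation by \<nabla>0, and, since the normal form
  of 1 is empty, it shows that \<epsilon>(a) \<le> 1 forces a to be right invertible, which
  is the same as a \<le> s(a). The statements about right divisibility are these statements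
  in the opposite category, which reverses words.\<close>

lemma reduced_iff_successively:
  "reduced S m bs \<longleftrightarrow>
     bs \<in> lists S \<and> (\<forall>x\<in>set bs. x \<notin> Idt S m) \<and> successively (\<lambda>x y. m x y = None) bs"
  by (simp add: reduced_def successively_conv_nth)

lemma reduced_snoc:
  "reduced S m (bs @ [x]) \<longleftrightarrow>
     reduced S m bs \<and> x \<in> S \<and> x \<notin> Idt S m \<and> (bs \<noteq> [] \<longrightarrow> m (last bs) x = None)"
  by (auto simp: reduced_iff_successively successively_append_iff)

lemma reduced_appendD: "reduced S m (bs @ cs) \<Longrightarrow> reduced S m bs"
  by (auto simp: reduced_iff_successively successively_append_iff)

lemma Idt_in_carrier: "e \<in> Idt S m \<Longrightarrow> e \<in> S"
  unfolding Idt_def by blast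

text \<open>The following rules must be used instantiated, as in \<open>Idt_opposite[of S m]\<close>:
  up to eta-conversion their left-hand sides match every \<open>m\<close>, so as unrestricted
  rewrite rules they loop.\<close>

lemma Idt_opposite: "Idt S (\<lambda>x y. m y x) = Idt S m"
  unfolding Idt_def by auto

lemma reduced_opposite_iff: "reduced S (\<lambda>x y. m y x) (rev bs) \<longleftrightarrow> reduced S m bs"
  unfolding reduced_iff_successively Idt_opposite[of S m] by (simp add: in_lists_conv_set)

lemma src_opposite: "src S (\<lambda>x y. m y x) = tgt S m"
  unfolding src_def tgt_def Idt_opposite[of S m] ..

lemma cat_le_opposite: "cat_le S (\<lambda>x y. m y x) = cat_rle S m"
  unfolding cat_le_def cat_rle_def by (intro ext) simp

lemma right_invertible_opposite: "right_invertible S (\<lambda>x y. m y x) = left_invertible S m"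
  unfolding right_invertible_def left_invertible_def Idt_opposite[of S m] by (intro ext) simp

lemma ucong_rev: "ucong S m u v \<Longrightarrow> ucong S (\<lambda>x y. m y x) (rev u) (rev v)"
proof (induction rule: ucong.induct)
  case (urefl w)
  then show ?case by (intro ucong.urefl) (simp add: in_lists_conv_set)
next
  case (uid e)
  then show ?case by (simp add: ucong.uid Idt_opposite[of S m])
next
  case (umul x y z)
  then show ?case using ucong.umul[of y S x "\<lambda>x y. m y x" z] by simp
next
  case (ucompat u v p q)
  then show ?case
    using ucong.ucompat[of S "\<lambda>x y. m y x" "rev u" "rev v" "rev q" "rev p"]
    by (simp add: in_lists_conv_set)
qed (blast intro: ucong.usym ucong.utrans)+

lemma ucong_opposite_iff: "ucong S (\<lambda>x y. m y x) u v \<longleftrightarrow> ucong S m (rev u) (rev v)"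
  using ucong_rev[of S m "rev u" "rev v"] ucong_rev[of S "\<lambda>x y. m y x" u v] by auto

lemma bex_lists_rev: "(\<exists>w\<in>lists A. P (rev w)) \<longleftrightarrow> (\<exists>w\<in>lists A. P w)"
  by (metis in_lists_conv_set rev_rev_ident set_rev)

lemma category_opposite:
  assumes "category S m"
  shows "category S (\<lambda>x y. m y x)"
proof -
  have assoc: "\<forall>x\<in>S. \<forall>y\<in>S. \<forall>z\<in>S.
      Option.bind (m x y) (\<lambda>u. m u z) = Option.bind (m y z) (\<lambda>v. m x v)"
   and defined: "\<forall>x\<in>S. \<forall>y\<in>S. \<forall>z\<in>S. m x y \<noteq> None \<longrightarrow> m y z \<noteq> None \<longrightarrow>
      Option.bind (m x y) (\<lambda>u. m u z) \<noteq> None"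
    using assms unfolding category_def by blast+
  have "\<forall>x\<in>S. \<forall>y\<in>S. \<forall>z\<in>S.
      Option.bind (m y x) (\<lambda>u. m z u) = Option.bind (m z y) (\<lambda>v. m v x)"
    using assoc by metis
  moreover have "\<forall>x\<in>S. \<forall>y\<in>S. \<forall>z\<in>S. m y x \<noteq> None \<longrightarrow> m z y \<noteq> None \<longrightarrow>
      Option.bind (m y x) (\<lambda>u. m z u) \<noteq> None"
    using assoc defined by metis
  ultimately show ?thesis
    using assms unfolding category_def Idt_opposite[of S m] by blast
qed

text \<open>A stack stores a reduced word in reverse order, its top being the last letter.\<close>

fun push :: "'a set \<Rightarrow> ('a \<Rightarrow> 'a \<Rightarrow> 'a option) \<Rightarrow> 'a list \<Rightarrow> 'a \<Rightarrow> 'a list" where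
  "push S m [] x = (if x \<in> Idt S m then [] else [x])"
| "push S m (c # cs) x =
     (if x \<in> Idt S m then c # cs
      else case m c x of Some w \<Rightarrow> push S m cs w | None \<Rightarrow> x # c # cs)"

definition normal_form :: "'a set \<Rightarrow> ('a \<Rightarrow> 'a \<Rightarrow> 'a option) \<Rightarrow> 'a list \<Rightarrow> 'a list" where
  "normal_form S m w = rev (foldl (push S m) [] w)"

definition reduced_stack :: "'a set \<Rightarrow> ('a \<Rightarrow> 'a \<Rightarrow> 'a option) \<Rightarrow> 'a list \<Rightarrow> bool" where
  "reduced_stack S m st \<longleftrightarrow> reduced S m (rev st)"

lemma reduced_stack_Nil [simp]: "reduced_stack S m []"
  by (simp add: reduced_stack_def reduced_def)

lemma reduced_stack_Cons [simp]:
  "reduced_stack S m (x # st) \<longleftrightarrow>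
     reduced_stack S m st \<and> x \<in> S \<and> x \<notin> Idt S m \<and> (st \<noteq> [] \<longrightarrow> m (hd st) x = None)"
  by (simp add: reduced_stack_def reduced_snoc last_rev)

lemma reduced_stack_lists: "reduced_stack S m st \<Longrightarrow> rev st \<in> lists S"
  by (simp add: reduced_stack_def reduced_def)

lemma push_Idt: "e \<in> Idt S m \<Longrightarrow> push S m st e = st"
  by (cases st) auto

lemma push_irreducible: "reduced_stack S m (x # st) \<Longrightarrow> push S m st x = x # st"
  by (cases st) auto

lemma foldl_push_reduced:
  "reduced S m (rev st @ bs) \<Longrightarrow> foldl (push S m) st bs = rev bs @ st"
proof (induction bs arbitrary: st)
  case (Cons x bs)
  then have "push S m st x = x # st"
    using reduced_appendD[of S m "rev st @ [x]" bs] push_irreducible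
    by (simp add: reduced_stack_def)
  then show ?case using Cons.IH[of "x # st"] Cons.prems by simp
qed simp

lemma normal_form_reduced: "reduced S m bs \<Longrightarrow> normal_form S m bs = bs"
  using foldl_push_reduced[of S m "[]" bs] by (simp add: normal_form_def)

locale arrow_category =
  fixes S :: "'a set" and m :: "'a \<Rightarrow> 'a \<Rightarrow> 'a option"
  assumes category: "category S m"
begin

lemma comp_closed: "m x y = Some z \<Longrightarrow> z \<in> S"
  using category unfolding category_def by blast

lemma comp_defined_in: "m x y \<noteq> None \<Longrightarrow> x \<in> S \<and> y \<in> S"
  using category unfolding category_def by blast

lemma comp_assoc: "x \<in> S \<Longrightarrow> y \<in> S \<Longrightarrow> z \<in> S \<Longrightarrow>
    Option.bind (m x y) (\<lambda>u. m u z) = Option.bind (m y z) (\<lambda>v. m x v)"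
  using category unfolding category_def by blast

lemma comp_assoc_defined:
  assumes "m x y = Some u" and "m y z = Some v"
  obtains w where "m u z = Some w" and "m x v = Some w"
proof -
  have S: "x \<in> S" "y \<in> S" "z \<in> S" using comp_defined_in assms by blast+
  then have "Option.bind (m x y) (\<lambda>u. m u z) \<noteq> None"
    using category assms unfolding category_def by blast
  then show thesis using that comp_assoc[OF S] assms by (cases "m u z") auto
qed

lemma comp_reassoc:
  assumes "m x y = Some u" and "m u z = Some w"
  obtains v where "m y z = Some v" and "m x v = Some w"
proof -
  have S: "x \<in> S" "y \<in> S" "z \<in> S" using comp_defined_in assms by blast+
  have "Option.bind (m y z) (\<lambda>v. m x v) = Some w" using comp_assoc[OF S] assms by simp
  then show thesis using that by (cases "m y z") auto
qed

lemma ex_left_Idt: "x \<in> S \<Longrightarrow> \<exists>e\<in>Idt S m. m e x \<noteq> None"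
  using category unfolding category_def by blast

lemma ex_right_Idt: "x \<in> S \<Longrightarrow> \<exists>e\<in>Idt S m. m x e \<noteq> None"
  using category unfolding category_def by blast

lemma Idt_comp_left: "e \<in> Idt S m \<Longrightarrow> m e x = Some z \<Longrightarrow> z = x"
  using comp_defined_in[of e x] unfolding Idt_def by force

lemma Idt_comp_right: "e \<in> Idt S m \<Longrightarrow> m x e = Some z \<Longrightarrow> z = x"
  using comp_defined_in[of x e] unfolding Idt_def by force

lemma Idt_comp_self: "e \<in> Idt S m \<Longrightarrow> m e e = Some e"
proof -
  assume e: "e \<in> Idt S m"
  obtain f where f: "f \<in> Idt S m" and "m f e \<noteq> None"
    using ex_left_Idt[OF Idt_in_carrier[OF e]] by blast
  then obtain z where fe: "m f e = Some z" by blast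
  have "z = e" using Idt_comp_left[OF f fe] .
  moreover have "z = f" using Idt_comp_right[OF e fe] .
  ultimately show ?thesis using fe by simp
qed

lemma Idt_right_invertible: "e \<in> Idt S m \<Longrightarrow> right_invertible S m e"
  unfolding right_invertible_def using Idt_comp_self Idt_in_carrier[of e S m] by blast

lemma Idt_unique_left:
  assumes e: "e \<in> Idt S m" and e': "e' \<in> Idt S m" and "m e x \<noteq> None" and "m e' x \<noteq> None"
  shows "e = e'"
proof -
  obtain y where y: "m e' x = Some y" using assms by blast
  then have "y = x" using Idt_comp_left[OF e'] by blast
  moreover have "e \<in> S" "e' \<in> S" "x \<in> S"
    using Idt_in_carrier[OF e] Idt_in_carrier[OF e'] comp_defined_in[of e' x] y by auto
  ultimately have "Option.bind (m e e') (\<lambda>u. m u x) = m e x"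
    using comp_assoc y by simp
  then obtain z where "m e e' = Some z" using assms by (cases "m e e'") auto
  then show "e = e'" using Idt_comp_left[OF e] Idt_comp_right[OF e'] by metis
qed

lemma src_eqI: "e \<in> Idt S m \<Longrightarrow> m e x \<noteq> None \<Longrightarrow> src S m x = e"
  unfolding src_def by (rule the_equality) (auto intro: Idt_unique_left)

lemma src_Idt: "x \<in> S \<Longrightarrow> src S m x \<in> Idt S m"
proof -
  assume "x \<in> S"
  then obtain e where "e \<in> Idt S m" and "m e x \<noteq> None" using ex_left_Idt by blast
  then show ?thesis using src_eqI by simp
qed

lemma cat_le_refl: "a \<in> S \<Longrightarrow> cat_le S m a a"
proof -
  assume "a \<in> S"
  then obtain e where e: "e \<in> Idt S m" and "m a e \<noteq> None" using ex_right_Idt by blast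
  then obtain z where ae: "m a e = Some z" by blast
  then show ?thesis
    unfolding cat_le_def using Idt_comp_right[OF e ae] Idt_in_carrier[OF e] by blast
qed

lemma cat_le_src_iff: "a \<in> S \<Longrightarrow> cat_le S m a (src S m a) \<longleftrightarrow> right_invertible S m a"
proof
  assume "a \<in> S" and "right_invertible S m a"
  then obtain x e where x: "x \<in> S" and e: "e \<in> Idt S m" and ax: "m a x = Some e"
    unfolding right_invertible_def by blast
  obtain f where f: "f \<in> Idt S m" and "m f a \<noteq> None"
    using ex_left_Idt[OF \<open>a \<in> S\<close>] by blast
  then obtain z where fa: "m f a = Some z" by blast
  then have "m f a = Some a" using Idt_comp_left[OF f] by simp
  then obtain w where "m a x = Some w" and "m f e = Some w" by (rule comp_assoc_defined[OF _ ax])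
  then have "m f e = Some e" using ax by simp
  then have "f = e" using Idt_comp_right[OF e] by metis
  then have "src S m a = e" using src_eqI f fa by blast
  then show "cat_le S m a (src S m a)" using x ax unfolding cat_le_def by blast
next
  assume "a \<in> S" and "cat_le S m a (src S m a)"
  then show "right_invertible S m a"
    using src_Idt unfolding cat_le_def right_invertible_def by blast
qed

lemma reduced_stack_push: "reduced_stack S m st \<Longrightarrow> x \<in> S \<Longrightarrow> reduced_stack S m (push S m st x)"
proof (induction st arbitrary: x)
  case (Cons c cs)
  then show ?case by (auto split: option.split dest: comp_closed)
qed simp

lemma foldl_push_reduced_stack:
  "reduced_stack S m st \<Longrightarrow> w \<in> lists S \<Longrightarrow> reduced_stack S m (foldl (push S m) st w)"
  by (induction w arbitrary: st) (auto simp: reduced_stack_push)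

lemma push_comp_Idt:
  assumes "m x y = Some z" and "x \<in> Idt S m \<or> y \<in> Idt S m"
  shows "push S m (push S m st x) y = push S m st z"
  using assms Idt_comp_left[of x y z] Idt_comp_right[of y x z] by (auto simp: push_Idt)

lemma push_comp:
  "reduced_stack S m st \<Longrightarrow> m x y = Some z \<Longrightarrow> push S m (push S m st x) y = push S m st z"
proof (induction st arbitrary: x y z)
  case Nil
  then show ?case
    using push_comp_Idt[OF Nil.prems(2), of "[]"] by (cases "x \<in> Idt S m \<or> y \<in> Idt S m") auto
next
  case (Cons c cs)
  show ?case
  proof (cases "x \<in> Idt S m \<or> y \<in> Idt S m")
    case True
    then show ?thesis using push_comp_Idt Cons.prems(2) by blast
  next
    case False
    show ?thesis
    proof (cases "m c x")
      case None
      then show ?thesis using False Cons.prems by simp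
    next
      case (Some w)
      obtain v where wy: "m w y = Some v" and cz: "m c z = Some v"
        by (rule comp_assoc_defined[OF Some Cons.prems(2)])
      have "push S m (push S m cs w) y = push S m cs v"
        using Cons.IH wy Cons.prems(1) by simp
      moreover have "push S m cs v = c # cs" if "z \<in> Idt S m"
        using Idt_comp_right[OF that cz] push_irreducible Cons.prems(1) by simp
      ultimately show ?thesis using False Some cz by simp
    qed
  qed
qed

lemma foldl_push_ucong:
  "ucong S m u v \<Longrightarrow> reduced_stack S m st \<Longrightarrow> foldl (push S m) st u = foldl (push S m) st v"
proof (induction arbitrary: st rule: ucong.induct)
  case (uid e)
  then show ?case by (simp add: push_Idt)
next
  case (umul x y z)
  then show ?case by (simp add: push_comp)
next
  case (ucompat u v p q)
  then show ?case by (simp add: foldl_push_reduced_stack)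
qed auto

lemma ucong_lists: "ucong S m u v \<Longrightarrow> u \<in> lists S \<and> v \<in> lists S"
  by (induction rule: ucong.induct) (auto simp: Idt_in_carrier dest: comp_closed)

lemma ucong_push:
  "reduced_stack S m st \<Longrightarrow> x \<in> S \<Longrightarrow> ucong S m (rev st @ [x]) (rev (push S m st x))"
proof (induction st arbitrary: x)
  case Nil
  then show ?case by (auto intro: ucong.uid ucong.urefl)
next
  case (Cons c cs)
  have cs: "rev cs \<in> lists S" and c: "c \<in> S"
    using Cons.prems reduced_stack_lists by auto
  show ?case
  proof (cases "x \<in> Idt S m")
    case True
    have "ucong S m ((rev cs @ [c]) @ [x] @ []) ((rev cs @ [c]) @ [] @ [])"
      by (rule ucong.ucompat[OF ucong.uid[OF True]]) (use cs c in auto)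
    then show ?thesis using True by simp
  next
    case False
    show ?thesis
    proof (cases "m c x")
      case None
      then show ?thesis using False Cons.prems cs c by (auto intro!: ucong.urefl)
    next
      case (Some w)
      have "ucong S m (rev cs @ [c, x] @ []) (rev cs @ [w] @ [])"
        by (rule ucong.ucompat[OF ucong.umul[where m=m, OF c Cons.prems(2) Some]]) (use cs in auto)
      moreover have "ucong S m (rev cs @ [w]) (rev (push S m cs w))"
        using Cons.IH Cons.prems(1) comp_closed[OF Some] by simp
      ultimately show ?thesis using False Some by (auto intro: ucong.utrans)
    qed
  qed
qed

lemma ucong_foldl_push:
  "reduced_stack S m st \<Longrightarrow> w \<in> lists S \<Longrightarrow> ucong S m (rev st @ w) (rev (foldl (push S m) st w))"
proof (induction w arbitrary: st)
  case Nil
  then show ?case by (auto intro: ucong.urefl dest: reduced_stack_lists)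
next
  case (Cons x w)
  then have x: "x \<in> S" and w: "w \<in> lists S" by auto
  have "ucong S m ([] @ (rev st @ [x]) @ w) ([] @ rev (push S m st x) @ w)"
    by (rule ucong.ucompat[OF ucong_push[OF Cons.prems(1) x]]) (use w in auto)
  moreover have "ucong S m (rev (push S m st x) @ w) (rev (foldl (push S m) (push S m st x) w))"
    using Cons.IH reduced_stack_push Cons.prems(1) x w by blast
  ultimately show ?case by (auto intro: ucong.utrans)
qed

lemma reduced_normal_form: "w \<in> lists S \<Longrightarrow> reduced S m (normal_form S m w)"
  using foldl_push_reduced_stack[of "[]" w] by (simp add: normal_form_def reduced_stack_def reduced_def)

lemma ucong_normal_form: "w \<in> lists S \<Longrightarrow> ucong S m w (normal_form S m w)"
  using ucong_foldl_push[of "[]" w] by (simp add: normal_form_def)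

lemma normal_form_ucong: "ucong S m u v \<Longrightarrow> normal_form S m u = normal_form S m v"
  using foldl_push_ucong[of u v "[]"] by (simp add: normal_form_def)

lemma reduced_ucong_eq: "reduced S m bs \<Longrightarrow> reduced S m cs \<Longrightarrow> ucong S m bs cs \<Longrightarrow> bs = cs"
  using normal_form_ucong normal_form_reduced by metis

text \<open>The bottom of the stack only changes by right multiplication: from a y it becomes
  a (y x), which is not an identity as a is not right invertible.\<close>

lemma cat_le_last_push:
  assumes "\<not> right_invertible S m a"
  shows "reduced_stack S m st \<Longrightarrow> x \<in> S \<Longrightarrow> st \<noteq> [] \<Longrightarrow> cat_le S m a (last st) \<Longrightarrow>
    push S m st x \<noteq> [] \<and> cat_le S m a (last (push S m st x))"
proof (induction st arbitrary: x)
  case (Cons c cs)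
  show ?case
  proof (cases "x \<notin> Idt S m \<and> m c x \<noteq> None \<and> cs = []")
    case True
    then obtain w where cx: "m c x = Some w" by blast
    obtain y where y: "y \<in> S" and ay: "m a y = Some c"
      using Cons.prems True unfolding cat_le_def by auto
    obtain u where "m y x = Some u" and au: "m a u = Some w"
      by (rule comp_reassoc[OF ay cx])
    then have "u \<in> S" using comp_closed by blast
    then have "w \<notin> Idt S m" and "cat_le S m a w"
      using assms au unfolding right_invertible_def cat_le_def by blast+
    then show ?thesis using True cx by simp
  next
    case False
    then show ?thesis
      using Cons comp_closed by (auto split: option.split)
  qed
qed simp

lemma cat_le_last_foldl_push:
  "\<not> right_invertible S m a \<Longrightarrow> reduced_stack S m st \<Longrightarrow> w \<in> lists S \<Longrightarrow> st \<noteq> [] \<Longrightarrow>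
    cat_le S m a (last st) \<Longrightarrow>
    foldl (push S m) st w \<noteq> [] \<and> cat_le S m a (last (foldl (push S m) st w))"
  by (induction w arbitrary: st) (auto simp: cat_le_last_push reduced_stack_push)

lemma cat_le_hd_normal_form:
  assumes a: "a \<in> S" and "\<not> right_invertible S m a" and "w \<in> lists S"
  shows "normal_form S m (a # w) \<noteq> [] \<and> cat_le S m a (hd (normal_form S m (a # w)))"
proof -
  have "a \<notin> Idt S m" using assms Idt_right_invertible by blast
  then have "push S m [] a = [a]" and "reduced_stack S m [a]" using a by simp_all
  then show ?thesis
    using cat_le_last_foldl_push[of a "[a]" w] assms cat_le_refl
    by (simp add: normal_form_def hd_rev)
qed

lemma ex_ucong_Cons_Nil_iff:
  assumes a: "a \<in> S"
  shows "(\<exists>w\<in>lists S. ucong S m (a # w) []) \<longleftrightarrow> right_invertible S m a"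
proof
  assume "\<exists>w\<in>lists S. ucong S m (a # w) []"
  then obtain w where "w \<in> lists S" and "normal_form S m (a # w) = []"
    using normal_form_ucong normal_form_reduced[of S m "[]"] by (force simp: reduced_def)
  then show "right_invertible S m a" using cat_le_hd_normal_form a by blast
next
  assume "right_invertible S m a"
  then obtain x e where x: "x \<in> S" and e: "e \<in> Idt S m" and ax: "m a x = Some e"
    unfolding right_invertible_def by blast
  have "ucong S m [a, x] []"
    using ucong.umul[where m=m, OF a x ax] ucong.uid[OF e] by (rule ucong.utrans)
  then show "\<exists>w\<in>lists S. ucong S m (a # w) []" using x by force
qed

lemma ex_ucong_Cons_iff:
  assumes a: "a \<in> S" and "\<not> right_invertible S m a" and bs: "reduced S m bs" "bs \<noteq> []"
  shows "(\<exists>w\<in>lists S. ucong S m (a # w) bs) \<longleftrightarrow> cat_le S m a (hd bs)"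
proof
  assume "\<exists>w\<in>lists S. ucong S m (a # w) bs"
  then obtain w where "w \<in> lists S" and "normal_form S m (a # w) = bs"
    using normal_form_ucong normal_form_reduced[OF bs(1)] by metis
  then show "cat_le S m a (hd bs)" using cat_le_hd_normal_form assms by blast
next
  assume "cat_le S m a (hd bs)"
  then obtain y where y: "y \<in> S" and ay: "m a y = Some (hd bs)" unfolding cat_le_def by blast
  have tl: "tl bs \<in> lists S" using bs by (cases bs) (auto simp: reduced_def)
  have "ucong S m ([] @ [a, y] @ tl bs) ([] @ [hd bs] @ tl bs)"
    by (rule ucong.ucompat[OF ucong.umul[where m=m, OF a y ay]]) (use tl in auto)
  then show "\<exists>w\<in>lists S. ucong S m (a # w) bs" using bs(2) y tl by force
qed

lemma cat_rle_tgt_iff: "a \<in> S \<Longrightarrow> cat_rle S m a (tgt S m a) \<longleftrightarrow> left_invertible S m a"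
proof -
  interpret op: arrow_category S "\<lambda>x y. m y x"
    using category_opposite[OF category] by unfold_locales
  show "a \<in> S \<Longrightarrow> ?thesis"
    using op.cat_le_src_iff by (simp add: src_opposite[of S m] cat_le_opposite[of S m] right_invertible_opposite[of S m])
qed

lemma ex_ucong_snoc_Nil_iff:
  assumes "a \<in> S"
  shows "(\<exists>w\<in>lists S. ucong S m (w @ [a]) []) \<longleftrightarrow> left_invertible S m a"
proof -
  interpret op: arrow_category S "\<lambda>x y. m y x"
    using category_opposite[OF category] by unfold_locales
  show ?thesis
    using op.ex_ucong_Cons_Nil_iff[OF assms] bex_lists_rev[of S "\<lambda>w. ucong S m (w @ [a]) []"]
    by (simp add: ucong_opposite_iff[of S m] right_invertible_opposite[of S m])
qed

lemma ex_ucong_snoc_iff: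
  assumes "a \<in> S" and "\<not> left_invertible S m a" and "reduced S m bs" and "bs \<noteq> []"
  shows "(\<exists>w\<in>lists S. ucong S m (w @ [a]) bs) \<longleftrightarrow> cat_rle S m a (last bs)"
proof -
  interpret op: arrow_category S "\<lambda>x y. m y x"
    using category_opposite[OF category] by unfold_locales
  have "reduced S (\<lambda>x y. m y x) (rev bs)" using assms reduced_opposite_iff by blast
  then show ?thesis
    using op.ex_ucong_Cons_iff[of a "rev bs"] assms bex_lists_rev[of S "\<lambda>w. ucong S m (w @ [a]) bs"]
    by (simp add: ucong_opposite_iff[of S m] right_invertible_opposite[of S m] cat_le_opposite[of S m] hd_rev)
qed

lemma ucls_eqI: "ucong S m u v \<Longrightarrow> ucls S m u = ucls S m v"
  unfolding ucls_def by (metis Collect_cong ucong.usym ucong.utrans)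

lemma ucls_eq_iff: "u \<in> lists S \<Longrightarrow> ucls S m u = ucls S m v \<longleftrightarrow> ucong S m u v"
proof
  assume "u \<in> lists S" and "ucls S m u = ucls S m v"
  moreover have "u \<in> ucls S m u" using \<open>u \<in> lists S\<close> by (simp add: ucls_def ucong.urefl)
  ultimately show "ucong S m u v" unfolding ucls_def by (simp add: ucong.usym)
qed (rule ucls_eqI)

lemma Umon_mult_ucls:
  assumes u: "u \<in> lists S" and v: "v \<in> lists S"
  shows "ucls S m u \<otimes>\<^bsub>Umon S m\<^esub> ucls S m v = ucls S m (u @ v)"
proof -
  define u' where "u' = (SOME x. x \<in> ucls S m u)"
  define v' where "v' = (SOME x. x \<in> ucls S m v)"
  have "u \<in> ucls S m u" "v \<in> ucls S m v" using assms by (auto simp: ucls_def ucong.urefl)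
  then have uu': "ucong S m u u'" and vv': "ucong S m v v'"
    unfolding u'_def v'_def ucls_def by (metis mem_Collect_eq someI_ex)+
  have "ucong S m ([] @ u @ v) ([] @ u' @ v)"
    by (rule ucong.ucompat[OF uu']) (use v in auto)
  moreover have "ucong S m (u' @ v @ []) (u' @ v' @ [])"
    by (rule ucong.ucompat[OF vv']) (use ucong_lists[OF uu'] in auto)
  ultimately have "ucong S m (u @ v) (u' @ v')" by (auto intro: ucong.utrans)
  then show ?thesis
    unfolding Umon_def u'_def v'_def by (simp add: ucls_eqI)
qed

lemma mon_le_eps_ucls_iff:
  assumes a: "a \<in> S"
  shows "mon_le (Umon S m) (eps S m a) (ucls S m bs) \<longleftrightarrow> (\<exists>w\<in>lists S. ucong S m (a # w) bs)"
proof -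
  have "mon_le (Umon S m) (eps S m a) (ucls S m bs) \<longleftrightarrow>
      (\<exists>w\<in>lists S. ucls S m (a # w) = ucls S m bs)"
    using Umon_mult_ucls[of "[a]"] a by (auto simp: mon_le_def Umon_def eps_def)
  also have "\<dots> \<longleftrightarrow> (\<exists>w\<in>lists S. ucong S m (a # w) bs)"
    using ucls_eq_iff a by (meson Cons_in_lists_iff)
  finally show ?thesis .
qed

lemma mon_rle_eps_ucls_iff:
  assumes a: "a \<in> S"
  shows "mon_rle (Umon S m) (eps S m a) (ucls S m bs) \<longleftrightarrow> (\<exists>w\<in>lists S. ucong S m (w @ [a]) bs)"
proof -
  have "mon_rle (Umon S m) (eps S m a) (ucls S m bs) \<longleftrightarrow>
      (\<exists>w\<in>lists S. ucls S m (w @ [a]) = ucls S m bs)"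
    using Umon_mult_ucls[of _ "[a]"] a by (auto simp: mon_rle_def Umon_def eps_def)
  also have "\<dots> \<longleftrightarrow> (\<exists>w\<in>lists S. ucong S m (w @ [a]) bs)"
    using ucls_eq_iff a by (meson append_in_lists_conv Cons_in_lists_iff lists.Nil)
  finally show ?thesis .
qed

lemma redseq_ucls: "reduced S m bs \<Longrightarrow> redseq S m (ucls S m bs) = bs"
  unfolding redseq_def
proof (rule the_equality)
  fix cs
  assume "reduced S m bs" and "reduced S m cs \<and> ucls S m cs = ucls S m bs"
  then show "cs = bs" using ucls_eq_iff reduced_ucong_eq by (metis reduced_def)
qed simp

lemma Umon_reduced_representative:
  assumes "b \<in> carrier (Umon S m)"
  obtains bs where "reduced S m bs" and "b = ucls S m bs"
proof -
  obtain w where "w \<in> lists S" and "b = ucls S m w" using assms by (auto simp: Umon_def)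
  then show thesis using that reduced_normal_form ucong_normal_form ucls_eqI by metis
qed

lemma mon_le_eps_one_iff:
  "a \<in> S \<Longrightarrow> mon_le (Umon S m) (eps S m a) \<one>\<^bsub>Umon S m\<^esub> \<longleftrightarrow> cat_le S m a (src S m a)"
  using mon_le_eps_ucls_iff ex_ucong_Cons_Nil_iff cat_le_src_iff by (simp add: Umon_def)

lemma mon_rle_eps_one_iff:
  "a \<in> S \<Longrightarrow> mon_rle (Umon S m) (eps S m a) \<one>\<^bsub>Umon S m\<^esub> \<longleftrightarrow> cat_rle S m a (tgt S m a)"
  using mon_rle_eps_ucls_iff ex_ucong_snoc_Nil_iff cat_rle_tgt_iff by (simp add: Umon_def)

lemma mon_le_eps_iff_nabla0:
  assumes "a \<in> S" and "\<not> right_invertible S m a"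
    and "b \<in> carrier (Umon S m)" and "b \<noteq> \<one>\<^bsub>Umon S m\<^esub>"
  shows "mon_le (Umon S m) (eps S m a) b \<longleftrightarrow> cat_le S m a (nabla0 S m b)"
proof -
  obtain bs where bs: "reduced S m bs" and b: "b = ucls S m bs"
    using Umon_reduced_representative[OF assms(3)] .
  then have "bs \<noteq> []" using assms(4) by (auto simp: Umon_def)
  then show ?thesis
    using assms bs b mon_le_eps_ucls_iff ex_ucong_Cons_iff by (simp add: nabla0_def redseq_ucls)
qed

lemma mon_rle_eps_iff_nabla1:
  assumes "a \<in> S" and "\<not> left_invertible S m a"
    and "b \<in> carrier (Umon S m)" and "b \<noteq> \<one>\<^bsub>Umon S m\<^esub>"
  shows "mon_rle (Umon S m) (eps S m a) b \<longleftrightarrow> cat_rle S m a (nabla1 S m b)"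
proof -
  obtain bs where bs: "reduced S m bs" and b: "b = ucls S m bs"
    using Umon_reduced_representative[OF assms(3)] .
  then have "bs \<noteq> []" using assms(4) by (auto simp: Umon_def)
  then show ?thesis
    using assms bs b mon_rle_eps_ucls_iff ex_ucong_snoc_iff by (simp add: nabla1_def redseq_ucls)
qed

end

theorem lemma5p3:
  fixes S :: "'a set" and m :: "'a \<Rightarrow> 'a \<Rightarrow> 'a option" and a :: 'a
  assumes "category S m" and "a \<in> S"
  shows "(mon_le (Umon S m) (eps S m a) \<one>\<^bsub>Umon S m\<^esub> \<longleftrightarrow> cat_le S m a (src S m a))
    \<and> (mon_rle (Umon S m) (eps S m a) \<one>\<^bsub>Umon S m\<^esub> \<longleftrightarrow> cat_rle S m a (tgt S m a))
    \<and> (\<forall>b \<in> carrier (Umon S m) - {\<one>\<^bsub>Umon S m\<^esub>}.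
          (\<not> right_invertible S m a \<longrightarrow>
             (mon_le (Umon S m) (eps S m a) b \<longleftrightarrow> cat_le S m a (nabla0 S m b)))
        \<and> (\<not> left_invertible S m a \<longrightarrow>
             (mon_rle (Umon S m) (eps S m a) b \<longleftrightarrow> cat_rle S m a (nabla1 S m b))))"
proof -
  interpret arrow_category S m by (rule arrow_category.intro) (rule assms(1))
  show ?thesis
    using assms(2) mon_le_eps_one_iff mon_rle_eps_one_iff mon_le_eps_iff_nabla0 mon_rle_eps_iff_nabla1
    by blast
qed

end
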